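(* For every $\rho\in\hom_0(\mathrm{PSL}_2(\mathbb Z),\mathrm{Isom}(X))$, the orientation-preserving isometry $\rho(baba)$ is given by a matrix in $\mathrm{SL}_3(\mathbb R)$ satisfying $$\mathrm{tr}(\rho(baba))=\mathrm{tr}(\rho(baba)^{-1}).$$
   Context: $X=\mathrm{SL}_3(\mathbb R)/\mathrm{SO}(3)$ is the Riemannian symmetric space and $\mathrm{Isom}(X)$ its full isometry group. Orientation-preserving isometries are $[M]\mapsto[gM]$ with $g\in\mathrm{SL}_3(\mathbb R)$ (identified with the matrix $g$); with $M^*=(M^{-1})^T$, orientation-reversing isometries have the form $[M]\mapsto[AM^*]$, and the inversion at $[A]$ is $[M]\mapsto[AA^TM^*]$. Let $R_\theta=\begin{pmatrix}1&0&0\\0&\cos\theta&-\sin\theta\\0&\sin\theta&\cos\theta\end{pmatrix}$. Present $\mathrm{PSL}_2(\mathbb Z)=\langle a,b\mid a^2=b^3=1\rangle$; $\hom_0(\mathrm{PSL}_2(\mathbb Z),\mathrm{Isom}(X))$ is the set of homomorphisms with $\rho(a)$ an inversion and $\rho(b)$ conjugate to $[M]\mapsto[R_{2\pi/3}M]$. *)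

theory Defs
  imports "HOL-Analysis.Analysis"
begin

type_synonym m3 = "real^3^3"

definition SL3 :: "m3 set" where
  "SL3 = {g. det g = 1}"

text \<open>The symmetric space X = SL3(R)/SO(3). The coset [M] is represented by the
  matrix M M^T (the map [M] to M M^T is a bijection of SL3(R)/SO(3) onto its image).\<close>
definition Xsym :: "m3 set" where
  "Xsym = {M ** transpose M | M. M \<in> SL3}"

text \<open>Orientation-preserving isometry [M] to [gM], in terms of P = M M^T.\<close>
definition act_pos :: "m3 \<Rightarrow> m3 \<Rightarrow> m3" where
  "act_pos g P = g ** P ** transpose g"

text \<open>Orientation-reversing isometry [M] to [A M^*], M^* = (M^-1)^T, in terms of P = M M^T.\<close>
definition act_neg :: "m3 \<Rightarrow> m3 \<Rightarrow> m3" where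
  "act_neg A P = A ** matrix_inv P ** transpose A"

definition IsomX :: "(m3 \<Rightarrow> m3) set" where
  "IsomX = {f. (\<exists>g\<in>SL3. \<forall>P\<in>Xsym. f P = act_pos g P) \<or>
               (\<exists>A\<in>SL3. \<forall>P\<in>Xsym. f P = act_neg A P)}"

text \<open>Inversion at [A]: [M] to [A A^T M^*].\<close>
definition is_inversion :: "(m3 \<Rightarrow> m3) \<Rightarrow> bool" where
  "is_inversion f \<longleftrightarrow> (\<exists>A\<in>SL3. \<forall>P\<in>Xsym. f P = act_neg (A ** transpose A) P)"

definition Rot :: "real \<Rightarrow> m3" where
  "Rot \<theta> = vector [vector [1, 0, 0],
                   vector [0, cos \<theta>, - sin \<theta>],
                   vector [0, sin \<theta>, cos \<theta>]]"

definition conj_isom :: "(m3 \<Rightarrow> m3) \<Rightarrow> (m3 \<Rightarrow> m3) \<Rightarrow> bool" where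
  "conj_isom f r \<longleftrightarrow> (\<exists>h\<in>IsomX. \<exists>h'\<in>IsomX.
      (\<forall>P\<in>Xsym. h (h' P) = P \<and> h' (h P) = P) \<and>
      (\<forall>P\<in>Xsym. f P = h (r (h' P))))"

text \<open>Hom_0(PSL2(Z), Isom(X)) via the presentation <a,b | a^2 = b^3 = 1>:
  a homomorphism is given by the images ra = rho(a), rb = rho(b) satisfying the relations.\<close>
definition hom0 :: "(m3 \<Rightarrow> m3) \<Rightarrow> (m3 \<Rightarrow> m3) \<Rightarrow> bool" where
  "hom0 ra rb \<longleftrightarrow> ra \<in> IsomX \<and> rb \<in> IsomX \<and>
     (\<forall>P\<in>Xsym. ra (ra P) = P) \<and> (\<forall>P\<in>Xsym. rb (rb (rb P)) = P) \<and>
     is_inversion ra \<and> conj_isom rb (act_pos (Rot (2 * pi / 3)))"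

end

theory Submission
  imports Defs
begin

text \<open>Write \<open>M\<^sup>*\<close> for the inverse transpose. The inversion \<open>\<rho>(a)\<close> reverses orientation
  and \<open>\<rho>(b)\<close> preserves it: otherwise \<open>\<rho>(b)\<^sup>3 = 1\<close> would be an orientation-reversing map
  \<open>P \<mapsto> D P\<^sup>-\<^sup>1 D\<^sup>T\<close> fixing \<open>X\<close> pointwise, which forces \<open>D\<close> to be orthogonal and hence to
  preserve traces, but \<open>tr P \<noteq> tr P\<^sup>-\<^sup>1\<close> for \<open>P = diag(2,2,1/4)\<close>. So \<open>\<rho>(ba)\<close> reverses
  orientation, say \<open>P \<mapsto> M P\<^sup>-\<^sup>1 M\<^sup>T\<close>, and \<open>\<rho>(baba) = \<rho>(ba)\<^sup>2\<close> is given by \<open>g = M M\<^sup>*\<close>.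
  Then \<open>(g\<^sup>-\<^sup>1)\<^sup>T = M\<^sup>* M\<close>, whose trace is that of \<open>M M\<^sup>*\<close>.\<close>

definition inv_transpose :: "'a::field^'n^'n \<Rightarrow> 'a^'n^'n" where
  "inv_transpose M = matrix_inv (transpose M)"

lemma matrix_inv_right:
  fixes A :: "'a::field^'n^'n"
  assumes "invertible A"
  shows "A ** matrix_inv A = mat 1"
  using assms unfolding invertible_def matrix_inv_def by (rule someI2_ex) auto

lemma matrix_inv_left:
  fixes A :: "'a::field^'n^'n"
  assumes "invertible A"
  shows "matrix_inv A ** A = mat 1"
  using assms matrix_inv_right matrix_left_right_inverse by blast

lemma matrix_inv_unique:
  fixes A B :: "'a::field^'n^'n"
  assumes "A ** B = mat 1"
  shows "matrix_inv A = B"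
proof -
  have "invertible A"
    using assms invertible_right_inverse by blast
  then have "matrix_inv A = matrix_inv A ** (A ** B)"
    using assms by simp
  also have "\<dots> = B"
    by (metis \<open>invertible A\<close> matrix_inv_left matrix_mul_assoc matrix_mul_lid)
  finally show ?thesis .
qed

lemma matrix_inv_mat_1: "matrix_inv (mat 1 :: 'a::field^'n^'n) = mat 1"
  by (rule matrix_inv_unique) simp

lemma matrix_inv_mult:
  fixes A B :: "'a::field^'n^'n"
  assumes "invertible A" "invertible B"
  shows "matrix_inv (A ** B) = matrix_inv B ** matrix_inv A"
proof (rule matrix_inv_unique)
  have "A ** B ** (matrix_inv B ** matrix_inv A) = A ** (B ** matrix_inv B) ** matrix_inv A"
    by (simp add: matrix_mul_assoc)
  then show "A ** B ** (matrix_inv B ** matrix_inv A) = mat 1"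
    using assms by (simp add: matrix_inv_right)
qed

lemma matrix_inv_transpose:
  fixes A :: "'a::field^'n^'n"
  assumes "invertible A"
  shows "matrix_inv (transpose A) = transpose (matrix_inv A)"
  by (rule matrix_inv_unique)
    (metis assms matrix_inv_left matrix_transpose_mul transpose_mat)

lemma matrix_inv_matrix_inv:
  fixes A :: "'a::field^'n^'n"
  assumes "invertible A"
  shows "matrix_inv (matrix_inv A) = A"
  by (rule matrix_inv_unique) (rule matrix_inv_left[OF assms])

lemma invertible_transpose:
  fixes A :: "'a::field^'n^'n"
  shows "invertible A \<Longrightarrow> invertible (transpose A)"
  by (simp add: invertible_det_nz det_transpose)

lemma invertible_matrix_inv:
  fixes A :: "'a::field^'n^'n"
  shows "invertible A \<Longrightarrow> invertible (matrix_inv A)"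
  using invertible_right_inverse matrix_inv_left by blast

lemma invertible_inv_transpose:
  fixes A :: "'a::field^'n^'n"
  shows "invertible A \<Longrightarrow> invertible (inv_transpose A)"
  by (simp add: inv_transpose_def invertible_matrix_inv invertible_transpose)

lemma transpose_inv_transpose:
  fixes A :: "'a::field^'n^'n"
  shows "invertible A \<Longrightarrow> transpose (inv_transpose A) = matrix_inv A"
  by (simp add: inv_transpose_def matrix_inv_transpose)

lemma det_matrix_inv:
  fixes A :: "'a::field^'n^'n"
  assumes "invertible A"
  shows "det (matrix_inv A) = inverse (det A)"
proof -
  have "det A * det (matrix_inv A) = 1"
    by (metis assms det_I det_mul matrix_inv_right)
  then show ?thesis
    by (simp add: inverse_unique)
qed

lemma matrix_inv_congruence:
  fixes E X :: "'a::field^'n^'n"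
  assumes "invertible E" "invertible X"
  shows "matrix_inv (E ** X ** transpose E) = inv_transpose E ** matrix_inv X ** matrix_inv E"
  using assms
  by (simp add: matrix_inv_mult invertible_mult invertible_transpose inv_transpose_def
      matrix_mul_assoc)

lemma trace_transpose: "trace (transpose A) = trace A"
  by (simp add: trace_def transpose_def)

lemma trace_orthogonal_congruence:
  fixes D X :: "'a::comm_ring_1^'n^'n"
  assumes "orthogonal_matrix D"
  shows "trace (D ** X ** transpose D) = trace X"
proof -
  have "trace (D ** X ** transpose D) = trace (X ** transpose D ** D)"
    by (metis trace_mul_sym matrix_mul_assoc)
  also have "\<dots> = trace X"
    using assms by (metis orthogonal_matrix_def matrix_mul_assoc matrix_mul_rid)
  finally show ?thesis .
qed

lemma trace_matrix_inv_mult_inv_transpose: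
  fixes M :: "'a::field^'n^'n"
  assumes "invertible M"
  shows "trace (matrix_inv (M ** inv_transpose M)) = trace (M ** inv_transpose M)"
proof -
  have "matrix_inv (M ** inv_transpose M) = transpose M ** matrix_inv M"
    using assms matrix_inv_mult[OF assms invertible_inv_transpose[OF assms]]
    by (simp add: inv_transpose_def matrix_inv_matrix_inv invertible_transpose)
  then have "trace (matrix_inv (M ** inv_transpose M)) = trace (transpose (matrix_inv M) ** M)"
    by (metis trace_transpose matrix_transpose_mul transpose_transpose)
  also have "\<dots> = trace (M ** inv_transpose M)"
    using assms by (simp add: trace_mul_sym[of _ M] inv_transpose_def matrix_inv_transpose)
  finally show ?thesis .
qed

lemma SL3_mult: "A \<in> SL3 \<Longrightarrow> B \<in> SL3 \<Longrightarrow> A ** B \<in> SL3"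
  by (simp add: SL3_def det_mul)

lemma SL3_invertible: "A \<in> SL3 \<Longrightarrow> invertible A"
  by (simp add: SL3_def invertible_det_nz)

lemma SL3_inv_transpose: "A \<in> SL3 \<Longrightarrow> inv_transpose A \<in> SL3"
  by (simp add: SL3_def inv_transpose_def det_matrix_inv invertible_det_nz)

lemma mult_inv_transpose_SL3: "invertible M \<Longrightarrow> M ** inv_transpose M \<in> SL3"
  by (simp add: SL3_def inv_transpose_def det_mul det_matrix_inv invertible_transpose
      invertible_det_nz)

lemma Xsym_invertible: "P \<in> Xsym \<Longrightarrow> invertible P"
  by (auto simp: Xsym_def SL3_def invertible_det_nz det_mul)

lemma matrix_inv_Xsym: "P \<in> Xsym \<Longrightarrow> matrix_inv P \<in> Xsym"
proof -
  assume "P \<in> Xsym"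
  then obtain M where M: "M \<in> SL3" "P = M ** transpose M"
    by (auto simp: Xsym_def)
  then have "matrix_inv P = inv_transpose M ** transpose (inv_transpose M)"
    using SL3_invertible[OF M(1)]
    by (simp add: matrix_inv_mult invertible_transpose inv_transpose_def matrix_inv_transpose)
  then show "matrix_inv P \<in> Xsym"
    using SL3_inv_transpose[OF M(1)] by (auto simp: Xsym_def)
qed

lemma act_pos_Xsym: "C \<in> SL3 \<Longrightarrow> P \<in> Xsym \<Longrightarrow> act_pos C P \<in> Xsym"
proof -
  assume "C \<in> SL3" "P \<in> Xsym"
  then obtain M where M: "M \<in> SL3" "P = M ** transpose M"
    by (auto simp: Xsym_def)
  then have "act_pos C P = (C ** M) ** transpose (C ** M)"
    by (simp add: act_pos_def matrix_transpose_mul matrix_mul_assoc)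
  then show "act_pos C P \<in> Xsym"
    using SL3_mult[OF \<open>C \<in> SL3\<close> M(1)] by (auto simp: Xsym_def)
qed

lemma act_neg_eq_act_pos_matrix_inv: "act_neg C P = act_pos C (matrix_inv P)"
  by (simp add: act_neg_def act_pos_def)

lemma IsomX_Xsym: "f \<in> IsomX \<Longrightarrow> P \<in> Xsym \<Longrightarrow> f P \<in> Xsym"
  by (auto simp: IsomX_def act_neg_eq_act_pos_matrix_inv act_pos_Xsym matrix_inv_Xsym)

lemma act_pos_act_neg: "act_pos C (act_neg E P) = act_neg (C ** E) P"
  by (simp add: act_pos_def act_neg_def matrix_transpose_mul matrix_mul_assoc)

lemma act_neg_act_pos:
  assumes "invertible E" "invertible P"
  shows "act_neg C (act_pos E P) = act_neg (C ** inv_transpose E) P"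
  using assms
  by (simp add: act_pos_def act_neg_def matrix_inv_congruence matrix_transpose_mul
      transpose_inv_transpose matrix_mul_assoc)

lemma act_neg_act_neg:
  assumes "invertible E" "invertible P"
  shows "act_neg C (act_neg E P) = act_pos (C ** inv_transpose E) P"
  using assms
  by (simp add: act_pos_def act_neg_def matrix_inv_congruence invertible_matrix_inv
      matrix_inv_matrix_inv matrix_transpose_mul transpose_inv_transpose matrix_mul_assoc)

definition diag3 :: "real \<Rightarrow> real \<Rightarrow> real \<Rightarrow> m3" where
  "diag3 a b c = (\<chi> i j. if i = j then (if i = 1 then a else if i = 2 then b else c) else 0)"

lemma diag3_mult: "diag3 a b c ** diag3 x y z = diag3 (a * x) (b * y) (c * z)"
  by (simp add: diag3_def matrix_matrix_mult_def vec_eq_iff sum_3 forall_3)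

lemma transpose_diag3: "transpose (diag3 a b c) = diag3 a b c"
  by (simp add: diag3_def transpose_def vec_eq_iff forall_3)

lemma diag3_1: "diag3 1 1 1 = mat 1"
  by (simp add: diag3_def mat_def vec_eq_iff forall_3)

lemma det_diag3: "det (diag3 a b c) = a * b * c"
  by (simp add: diag3_def det_3)

lemma trace_diag3: "trace (diag3 a b c) = a + b + c"
  by (simp add: diag3_def trace_def sum_3)

lemma matrix_inv_diag3:
  "a \<noteq> 0 \<Longrightarrow> b \<noteq> 0 \<Longrightarrow> c \<noteq> 0 \<Longrightarrow> matrix_inv (diag3 a b c) = diag3 (1 / a) (1 / b) (1 / c)"
  by (rule matrix_inv_unique) (simp add: diag3_mult diag3_1)

lemma diag3_squares_Xsym: "a * b * c = 1 \<Longrightarrow> diag3 (a\<^sup>2) (b\<^sup>2) (c\<^sup>2) \<in> Xsym"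
  unfolding Xsym_def SL3_def
  by (rule CollectI, rule exI[of _ "diag3 a b c"])
    (simp add: transpose_diag3 diag3_mult det_diag3 power2_eq_square)

lemma act_neg_not_identity: "\<not> (\<forall>P\<in>Xsym. act_neg D P = P)"
proof
  assume id: "\<forall>P\<in>Xsym. act_neg D P = P"
  have "mat 1 \<in> Xsym"
    using diag3_squares_Xsym[of 1 1 1] by (simp add: diag3_1)
  then have "D ** transpose D = mat 1"
    using id by (metis act_neg_def matrix_inv_mat_1 matrix_mul_rid)
  then have D: "orthogonal_matrix D"
    by (simp add: orthogonal_matrix_def matrix_left_right_inverse)
  define P where "P = diag3 2 2 (1 / 4)"
  have "P \<in> Xsym"
    using diag3_squares_Xsym[of "sqrt 2" "sqrt 2" "1 / 2"] by (simp add: P_def power_divide)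
  then have "trace P = trace (matrix_inv P)"
    using id trace_orthogonal_congruence[OF D] by (metis act_neg_def)
  then show False
    by (simp add: P_def matrix_inv_diag3 trace_diag3)
qed

lemma IsomX_order_three_act_pos:
  assumes "f \<in> IsomX" and order3: "\<forall>P\<in>Xsym. f (f (f P)) = P"
  shows "\<exists>B\<in>SL3. \<forall>P\<in>Xsym. f P = act_pos B P"
proof (rule ccontr)
  assume "\<not> ?thesis"
  then obtain C where C: "C \<in> SL3" and f: "\<And>P. P \<in> Xsym \<Longrightarrow> f P = act_neg C P"
    using assms(1) by (auto simp: IsomX_def)
  have C': "invertible (C ** inv_transpose C)"
    using C by (simp add: SL3_invertible SL3_mult SL3_inv_transpose)
  have "act_neg (C ** inv_transpose (C ** inv_transpose C)) P = P" if "P \<in> Xsym" for P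
  proof -
    have "P = act_neg C (act_neg C (act_neg C P))"
      using order3 that f assms(1) IsomX_Xsym by metis
    also have "\<dots> = act_neg (C ** inv_transpose (C ** inv_transpose C)) P"
      using that C C' by (simp add: act_neg_act_neg act_neg_act_pos SL3_invertible Xsym_invertible)
    finally show ?thesis by simp
  qed
  then show False
    using act_neg_not_identity by blast
qed

theorem lemma4p3:
  fixes ra rb :: "m3 \<Rightarrow> m3"
  assumes "hom0 ra rb"
  shows "\<exists>g\<in>SL3. (\<forall>P\<in>Xsym. rb (ra (rb (ra P))) = act_pos g P) \<and>
                   trace g = trace (matrix_inv g)"
proof -
  have ra: "ra \<in> IsomX" and rb: "rb \<in> IsomX" "\<forall>P\<in>Xsym. rb (rb (rb P)) = P"
    using assms by (auto simp: hom0_def)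
  obtain A where A: "A \<in> SL3" and ra_eq: "\<And>P. P \<in> Xsym \<Longrightarrow> ra P = act_neg (A ** transpose A) P"
    using assms by (auto simp: hom0_def is_inversion_def)
  obtain B where B: "B \<in> SL3" and rb_eq: "\<And>P. P \<in> Xsym \<Longrightarrow> rb P = act_pos B P"
    using IsomX_order_three_act_pos[OF rb] by blast
  define M where "M = B ** (A ** transpose A)"
  have M: "invertible M"
    using A B by (simp add: M_def SL3_def invertible_det_nz det_mul)
  have ba: "rb (ra P) = act_neg M P" if "P \<in> Xsym" for P
    using that IsomX_Xsym[OF ra] by (metis ra_eq rb_eq act_pos_act_neg M_def)
  have "rb (ra (rb (ra P))) = act_pos (M ** inv_transpose M) P" if "P \<in> Xsym" for P
  proof -
    have "act_neg M P \<in> Xsym"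
      using that ra rb by (simp add: IsomX_Xsym flip: ba)
    then show ?thesis
      using that M by (simp add: ba act_neg_act_neg Xsym_invertible)
  qed
  then show ?thesis
    using mult_inv_transpose_SL3[OF M] trace_matrix_inv_mult_inv_transpose[OF M] by auto
qed

end
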